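(* Let $\alpha$ be a probability distribution on $[d]$ with $\alpha_1\ge\cdots\ge\alpha_d$ and fix $k\in[d]$. Then \[ n\mapsto \mathbb E_{\lambda\sim\mathrm{SW}^n(\alpha)}\big[(\lambda_1+\cdots+\lambda_k)-(\alpha_1+\cdots+\alpha_k)n\big] \] is a nondecreasing function of $n\in\mathbb N$.
   Context: $\mathrm{SW}^n(\alpha)$ is the law of the RSK shape $\mathrm{shRSK}(\boldsymbol w)$ (Young diagram $\lambda_1\ge\cdots\ge\lambda_d\ge0$ whose first $k$ rows sum to the maximum total length of $k$ disjoint weakly increasing subsequences of $\boldsymbol w$), where $\boldsymbol w\in[d]^n$ has i.i.d. letters with law $\alpha$. *)

theory Defs
  imports Complex_Main
begin

text \<open>Letters of the alphabet [d] are encoded as 0,...,d-1; a word of length n is a list.\<close>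

definition words :: "nat \<Rightarrow> nat \<Rightarrow> nat list set" where
  "words d n = {w. length w = n \<and> set w \<subseteq> {0..<d}}"

definition weakly_incr_on :: "nat list \<Rightarrow> nat set \<Rightarrow> bool" where
  "weakly_incr_on w S \<longleftrightarrow> S \<subseteq> {..<length w} \<and>
     (\<forall>i\<in>S. \<forall>j\<in>S. i < j \<longrightarrow> w ! i \<le> w ! j)"

definition greene :: "nat \<Rightarrow> nat list \<Rightarrow> nat" where
  "greene k w = Max {(\<Sum>i<k. card (S i)) | S.
      (\<forall>i<k. weakly_incr_on w (S i)) \<and> (\<forall>i<k. \<forall>j<k. i \<noteq> j \<longrightarrow> S i \<inter> S j = {})}"

text \<open>Row lengths of the RSK shape: lambda_1 + ... + lambda_k = greene k w,
  so lambda_i = greene i w - greene (i-1) w (rows indexed from 1).\<close>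
definition shRSK :: "nat list \<Rightarrow> nat \<Rightarrow> nat" where
  "shRSK w i = greene i w - greene (i - 1) w"

definition word_prob :: "(nat \<Rightarrow> real) \<Rightarrow> nat list \<Rightarrow> real" where
  "word_prob \<alpha> w = (\<Prod>i<length w. \<alpha> (w ! i))"

definition SW_excess :: "nat \<Rightarrow> (nat \<Rightarrow> real) \<Rightarrow> nat \<Rightarrow> nat \<Rightarrow> real" where
  "SW_excess d \<alpha> k n = (\<Sum>w\<in>words d n. word_prob \<alpha> w *
      (real (\<Sum>i=1..k. shRSK w i) - (\<Sum>j<k. \<alpha> j) * real n))"

end

theory Submission
  imports Defs
begin

text \<open>Prepending a letter \<open>a\<close> to a word never decreases \<open>greene k\<close>, and increases it when
  \<open>a < k\<close>. For the latter, take among the optimal families of \<open>k\<close> disjoint weakly increasing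
  subsequences one maximising the total rank of the heads (ordered by letter, then position).
  If no member accepts \<open>a\<close> in front, all \<open>k\<close> heads carry letters below \<open>a\<close>, so two heads
  carry the same letter; moving the run of that letter from the earlier member to the front of
  the later one keeps the family optimal and raises the rank, a contradiction. Averaging over
  the first letter shows that the expectation of \<open>greene k\<close> grows by at least
  \<open>\<alpha> 0 + \<dots> + \<alpha> (k - 1)\<close> from length \<open>n\<close> to length \<open>n + 1\<close>.\<close>

definition incr_family :: "nat list \<Rightarrow> nat \<Rightarrow> (nat \<Rightarrow> nat set) \<Rightarrow> bool" where
  "incr_family w k S \<longleftrightarrow>
     (\<forall>i<k. weakly_incr_on w (S i)) \<and> (\<forall>i<k. \<forall>j<k. i \<noteq> j \<longrightarrow> S i \<inter> S j = {})"

definition family_card :: "nat \<Rightarrow> (nat \<Rightarrow> nat set) \<Rightarrow> nat" where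
  "family_card k S = (\<Sum>i<k. card (S i))"

lemma weakly_incr_on_subset_lessThan: "weakly_incr_on w X \<Longrightarrow> X \<subseteq> {..<length w}"
  unfolding weakly_incr_on_def by blast

lemma weakly_incr_on_finite: "weakly_incr_on w X \<Longrightarrow> finite X"
  using weakly_incr_on_subset_lessThan finite_subset by blast

lemma weakly_incr_onD: "weakly_incr_on w X \<Longrightarrow> i \<in> X \<Longrightarrow> j \<in> X \<Longrightarrow> i \<le> j \<Longrightarrow> w ! i \<le> w ! j"
  unfolding weakly_incr_on_def by (cases "i = j") auto

lemma weakly_incr_on_Min_le: "weakly_incr_on w X \<Longrightarrow> j \<in> X \<Longrightarrow> w ! Min X \<le> w ! j"
  by (metis Min_in Min_le empty_iff weakly_incr_onD weakly_incr_on_finite)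

lemma weakly_incr_on_subset: "weakly_incr_on w X \<Longrightarrow> Y \<subseteq> X \<Longrightarrow> weakly_incr_on w Y"
  unfolding weakly_incr_on_def by blast

lemma weakly_incr_on_Suc_image: "weakly_incr_on w X \<Longrightarrow> weakly_incr_on (a # w) (Suc ` X)"
  unfolding weakly_incr_on_def by auto

lemma weakly_incr_on_insert_0:
  assumes "weakly_incr_on w X" and "\<forall>j\<in>X. a \<le> w ! j"
  shows "weakly_incr_on (a # w) (insert 0 (Suc ` X))"
  using assms unfolding weakly_incr_on_def by (auto simp: nth_Cons split: nat.split)

lemma incr_family_weakly_incr: "incr_family w k S \<Longrightarrow> i < k \<Longrightarrow> weakly_incr_on w (S i)"
  unfolding incr_family_def by blast

lemma incr_family_disjoint: "incr_family w k S \<Longrightarrow> i < k \<Longrightarrow> j < k \<Longrightarrow> i \<noteq> j \<Longrightarrow> S i \<inter> S j = {}"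
  unfolding incr_family_def by blast

lemma incr_family_empty: "incr_family w k (\<lambda>_. {})"
  unfolding incr_family_def weakly_incr_on_def by blast

lemma family_card_le:
  assumes "incr_family w k S"
  shows "family_card k S \<le> k * length w"
proof -
  have "card (S i) \<le> length w" if "i < k" for i
    using card_mono[OF _ weakly_incr_on_subset_lessThan[OF incr_family_weakly_incr[OF assms that]]]
    by simp
  then have "family_card k S \<le> (\<Sum>i<k. length w)"
    unfolding family_card_def by (intro sum_mono) simp
  then show ?thesis by simp
qed

lemma greene_eq_Max: "greene k w = Max {family_card k S | S. incr_family w k S}"
  unfolding greene_def family_card_def incr_family_def ..

lemma finite_family_cards: "finite {family_card k S | S. incr_family w k S}"
  by (rule finite_subset[of _ "{..k * length w}"]) (auto dest: family_card_le)

lemma family_card_le_greene: "incr_family w k S \<Longrightarrow> family_card k S \<le> greene k w"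
  unfolding greene_eq_Max by (rule Max_ge[OF finite_family_cards]) blast

lemma greene_attained:
  obtains S where "incr_family w k S" and "family_card k S = greene k w"
proof -
  have "greene k w \<in> {family_card k S | S. incr_family w k S}"
    unfolding greene_eq_Max using finite_family_cards incr_family_empty by (intro Max_in) blast+
  then show ?thesis using that by auto
qed

lemma greene_0: "greene 0 w = 0"
  by (metis family_card_def greene_attained lessThan_0 sum.empty)

lemma greene_le_greene_Suc: "greene k w \<le> greene (Suc k) w"
proof -
  obtain S where S: "incr_family w k S" "family_card k S = greene k w"
    by (rule greene_attained)
  have "incr_family w (Suc k) (S(k := {}))"
    using S(1) unfolding incr_family_def weakly_incr_on_def less_Suc_eq by auto
  moreover have "family_card (Suc k) (S(k := {})) = family_card k S"
    unfolding family_card_def by simp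
  ultimately show ?thesis using family_card_le_greene S(2) by metis
qed

lemma sum_shRSK_eq_greene: "(\<Sum>i=1..k. shRSK w i) = greene k w"
proof (induction k)
  case 0
  then show ?case by (simp add: greene_0)
next
  case (Suc k)
  then show ?case using greene_le_greene_Suc[of k w] by (simp add: shRSK_def)
qed

lemma incr_family_Suc_image: "incr_family w k S \<Longrightarrow> incr_family (a # w) k (\<lambda>i. Suc ` S i)"
  unfolding incr_family_def by (auto intro: weakly_incr_on_Suc_image)

lemma greene_le_greene_Cons: "greene k w \<le> greene k (a # w)"
proof -
  obtain S where S: "incr_family w k S" "family_card k S = greene k w"
    by (rule greene_attained)
  have "family_card k (\<lambda>i. Suc ` S i) = family_card k S"
    unfolding family_card_def by (simp add: card_image)
  then show ?thesis
    using family_card_le_greene[OF incr_family_Suc_image[OF S(1)]] S(2) by metis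
qed

lemma incr_family_Cons:
  assumes S: "incr_family w k S" and i0: "i0 < k" and a: "\<forall>j\<in>S i0. a \<le> w ! j"
  defines "T \<equiv> \<lambda>i. if i = i0 then insert 0 (Suc ` S i) else Suc ` S i"
  shows "incr_family (a # w) k T" and "family_card k T = Suc (family_card k S)"
proof -
  show "incr_family (a # w) k T"
    using S weakly_incr_on_insert_0[OF incr_family_weakly_incr[OF S i0] a]
    unfolding incr_family_def T_def by (auto intro: weakly_incr_on_Suc_image)
  have "card (T i) = card (S i) + (if i = i0 then 1 else 0)" for i
    using weakly_incr_on_finite[OF incr_family_weakly_incr[OF S i0]]
    by (simp add: T_def card_image)
  then have "family_card k T = family_card k S + (\<Sum>i<k. if i = i0 then 1 else 0)"
    unfolding family_card_def by (simp add: sum.distrib)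
  then show "family_card k T = Suc (family_card k S)"
    using i0 by simp
qed

definition lex_rank :: "nat list \<Rightarrow> nat \<Rightarrow> nat" where
  "lex_rank w p = w ! p * length w + p"

definition head_rank :: "nat list \<Rightarrow> nat set \<Rightarrow> nat" where
  "head_rank w X = (if X = {} then Suc (Max (set w)) * length w else lex_rank w (Min X))"

lemma lex_rank_less:
  assumes "q < length w" and "w ! q < w ! r \<or> w ! q = w ! r \<and> q < r"
  shows "lex_rank w q < lex_rank w r"
  using assms(2)
proof
  assume "w ! q < w ! r"
  then have "Suc (w ! q) * length w \<le> w ! r * length w"
    by (intro mult_right_mono) simp_all
  then show ?thesis using assms(1) by (simp add: lex_rank_def)
qed (simp add: lex_rank_def)

lemma head_rank_less_empty:
  assumes "weakly_incr_on w X" and "X \<noteq> {}"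
  shows "head_rank w X < head_rank w {}"
proof -
  have m: "Min X < length w"
    using assms weakly_incr_on_subset_lessThan weakly_incr_on_finite Min_in by blast
  then have "w ! Min X \<le> Max (set w)" by simp
  then have "w ! Min X * length w \<le> Max (set w) * length w"
    by (rule mult_right_mono) simp
  then have "lex_rank w (Min X) < length w + Max (set w) * length w"
    using m unfolding lex_rank_def by linarith
  then show ?thesis using assms(2) by (simp add: head_rank_def)
qed

lemma head_rank_le_empty: "weakly_incr_on w X \<Longrightarrow> head_rank w X \<le> head_rank w {}"
  using head_rank_less_empty by (cases "X = {}") (auto intro: less_imp_le)

lemma head_run_exchange:
  assumes C1: "weakly_incr_on w C1" and C2: "weakly_incr_on w C2" and disj: "C1 \<inter> C2 = {}"
    and ne: "C1 \<noteq> {}" "C2 \<noteq> {}" and lt: "Min C1 < Min C2"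
    and same_head: "w ! Min C1 = w ! Min C2"
    and P: "P = {x \<in> C1. x < Min C2 \<and> w ! x = w ! Min C2}"
  shows "weakly_incr_on w (C1 - P)" and "weakly_incr_on w (P \<union> C2)"
    and "head_rank w (P \<union> C2) = head_rank w C1"
    and "head_rank w C2 < head_rank w (C1 - P)"
proof -
  define q where "q = Min C2"
  have fin: "finite C1" "finite C2" using C1 C2 weakly_incr_on_finite by blast+
  have q: "q \<in> C2" and q_min: "\<And>x. x \<in> C2 \<Longrightarrow> q \<le> x"
    using fin ne by (auto simp: q_def)
  have q_len: "q < length w" using q weakly_incr_on_subset_lessThan[OF C2] by blast
  have C1_ge: "w ! q \<le> w ! x" if "x \<in> C1" for x
    using weakly_incr_on_Min_le[OF C1 that] same_head by (simp add: q_def)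
  have C2_ge: "w ! q \<le> w ! x" if "x \<in> C2" for x
    using weakly_incr_on_Min_le[OF C2 that] by (simp add: q_def)
  have "P \<subseteq> C1" using P by blast
  show "weakly_incr_on w (C1 - P)" using C1 by (rule weakly_incr_on_subset) blast
  show "weakly_incr_on w (P \<union> C2)"
    unfolding weakly_incr_on_def
  proof (intro conjI ballI impI)
    show "P \<union> C2 \<subseteq> {..<length w}"
      using \<open>P \<subseteq> C1\<close> weakly_incr_on_subset_lessThan[OF C1] weakly_incr_on_subset_lessThan[OF C2]
      by blast
    fix x y assume x: "x \<in> P \<union> C2" and y: "y \<in> P \<union> C2" and "x < y"
    show "w ! x \<le> w ! y"
    proof (cases "x \<in> P")
      case True
      then show ?thesis using y \<open>x < y\<close> \<open>P \<subseteq> C1\<close> C2_ge weakly_incr_onD[OF C1]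
        unfolding P q_def by fastforce
    next
      case False
      then have "x \<in> C2" using x by blast
      then have "y \<in> C2" using y \<open>x < y\<close> q_min unfolding P q_def by fastforce
      then show ?thesis using weakly_incr_onD[OF C2 \<open>x \<in> C2\<close>] \<open>x < y\<close> by simp
    qed
  qed
  have "Min C1 \<in> P" using Min_in[OF fin(1) ne(1)] lt same_head by (simp add: P)
  moreover have "Min C1 \<le> y" if "y \<in> P \<union> C2" for y
    using that \<open>P \<subseteq> C1\<close> fin q_min[of y] lt[folded q_def] by auto
  ultimately have "Min (P \<union> C2) = Min C1"
    using fin \<open>P \<subseteq> C1\<close> by (intro Min_eqI) (auto intro: finite_subset)
  then show "head_rank w (P \<union> C2) = head_rank w C1"
    using \<open>Min C1 \<in> P\<close> ne by (auto simp: head_rank_def)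
  show "head_rank w C2 < head_rank w (C1 - P)"
  proof (cases "C1 - P = {}")
    case True
    then show ?thesis using head_rank_less_empty[OF C2 ne(2)] by (simp only:)
  next
    case False
    define r where "r = Min (C1 - P)"
    have r: "r \<in> C1" "r \<notin> P" using Min_in[OF _ False] fin by (auto simp: r_def)
    then have "r \<noteq> q" using q disj by blast
    then have "w ! q < w ! r \<or> w ! q = w ! r \<and> q < r"
      using r C1_ge[OF r(1)] unfolding P q_def by auto
    then show ?thesis
      using lex_rank_less[OF q_len] False ne by (simp add: head_rank_def q_def r_def)
  qed
qed

lemma sum_fun_upd2:
  assumes "finite I" "i \<in> I" "j \<in> I" "i \<noteq> j"
  shows "(\<Sum>l\<in>I. F ((S(i := A, j := B)) l)) + (F (S i) + F (S j))
       = (\<Sum>l\<in>I. F (S l)) + (F A + F B)"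
proof -
  have split: "(\<Sum>l\<in>I. G l) = G i + G j + (\<Sum>l\<in>I - {i, j}. G l)" for G :: "_ \<Rightarrow> 'b::comm_monoid_add"
    using assms by (simp add: sum.remove[of I i] sum.remove[of "I - {i}" j] insert_Diff_if
        Diff_insert2[symmetric] add.assoc)
  have "(\<Sum>l\<in>I - {i, j}. F ((S(i := A, j := B)) l)) = (\<Sum>l\<in>I - {i, j}. F (S l))"
    by (rule sum.cong) auto
  then have "(\<Sum>l\<in>I. F ((S(i := A, j := B)) l)) = F A + F B + (\<Sum>l\<in>I - {i, j}. F (S l))"
    using split[of "\<lambda>l. F ((S(i := A, j := B)) l)"] assms(4) by simp
  then show ?thesis using split[of "\<lambda>l. F (S l)"] by (simp add: ac_simps)
qed

lemma incr_family_fun_upd2: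
  assumes S: "incr_family w k S" and ij: "i < k" "j < k" "i \<noteq> j"
    and A: "weakly_incr_on w A" and B: "weakly_incr_on w B"
    and union: "A \<union> B = S i \<union> S j" and disj: "A \<inter> B = {}"
  shows "incr_family w k (S(i := A, j := B))"
    and "family_card k (S(i := A, j := B)) = family_card k S"
proof -
  have apart: "S l \<inter> (S i \<union> S j) = {}" if "l < k" "l \<noteq> i" "l \<noteq> j" for l
    using incr_family_disjoint[OF S] that ij by blast
  show "incr_family w k (S(i := A, j := B))"
    using S A B ij unfolding incr_family_def
  proof (intro conjI allI impI)
    fix l m assume "l < k" "m < k" "l \<noteq> m"
    then show "(S(i := A, j := B)) l \<inter> (S(i := A, j := B)) m = {}"
      using incr_family_disjoint[OF S] apart[of l] apart[of m] union disj ij(3)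
      by (cases "l \<in> {i, j}"; cases "m \<in> {i, j}") auto
  qed auto
  have "card A + card B = card (S i) + card (S j)"
    using weakly_incr_on_finite[OF A] weakly_incr_on_finite[OF B] disj union
      weakly_incr_on_finite[OF incr_family_weakly_incr[OF S]] incr_family_disjoint[OF S ij] ij
    by (metis card_Un_disjoint)
  then show "family_card k (S(i := A, j := B)) = family_card k S"
    using sum_fun_upd2[of "{..<k}" i j card S A B] ij unfolding family_card_def by simp
qed

lemma incr_family_uncross:
  assumes S: "incr_family w k S" and ij: "i < k" "j < k" "i \<noteq> j"
    and ne: "S i \<noteq> {}" "S j \<noteq> {}" and lt: "Min (S i) < Min (S j)"
    and same_head: "w ! Min (S i) = w ! Min (S j)"
  obtains S' where "incr_family w k S'" and "family_card k S' = family_card k S"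
    and "(\<Sum>l<k. head_rank w (S l)) < (\<Sum>l<k. head_rank w (S' l))"
proof -
  define P where "P = {x \<in> S i. x < Min (S j) \<and> w ! x = w ! Min (S j)}"
  note exchange = head_run_exchange[OF incr_family_weakly_incr[OF S ij(1)]
      incr_family_weakly_incr[OF S ij(2)] incr_family_disjoint[OF S ij] ne lt same_head P_def]
  have "P \<subseteq> S i" by (auto simp: P_def)
  then have "(S i - P) \<union> (P \<union> S j) = S i \<union> S j" and "(S i - P) \<inter> (P \<union> S j) = {}"
    using incr_family_disjoint[OF S ij] by blast+
  note update = incr_family_fun_upd2[OF S ij exchange(1,2) this]
  have "(\<Sum>l<k. head_rank w (S l)) < (\<Sum>l<k. head_rank w ((S(i := S i - P, j := P \<union> S j)) l))"
    using sum_fun_upd2[of "{..<k}" i j "head_rank w" S "S i - P" "P \<union> S j"] ij exchange(3,4)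
    by simp
  then show ?thesis using that update by blast
qed

lemma greene_Cons_ge_Suc:
  assumes "a < k"
  shows "Suc (greene k w) \<le> greene k (a # w)"
proof -
  let ?optimal = "\<lambda>S. incr_family w k S \<and> family_card k S = greene k w"
  let ?potential = "\<lambda>S. \<Sum>i<k. head_rank w (S i)"
  obtain S0 where "?optimal S0" using greene_attained by metis
  moreover have "?potential S < Suc (k * head_rank w {})" if "?optimal S" for S
  proof -
    have "?potential S \<le> (\<Sum>i<k. head_rank w {})"
      using that by (intro sum_mono head_rank_le_empty incr_family_weakly_incr) auto
    then show ?thesis by simp
  qed
  ultimately obtain S where S: "?optimal S"
    and S_max: "\<And>S'. ?optimal S' \<Longrightarrow> ?potential S' \<le> ?potential S"
    using Lattices_Big.ex_has_greatest_nat[of ?optimal S0 ?potential] by blast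
  then have S_fam: "incr_family w k S" by blast
  have "\<exists>i<k. \<forall>j\<in>S i. a \<le> w ! j"
  proof (rule ccontr)
    assume no_slot: "\<not> ?thesis"
    have ne: "S i \<noteq> {}" and head_lt: "w ! Min (S i) < a" if "i < k" for i
      using no_slot that weakly_incr_on_Min_le[OF incr_family_weakly_incr[OF S_fam that]]
      by (fastforce simp: not_le)+
    have "\<not> inj_on (\<lambda>i. w ! Min (S i)) {..<k}"
    proof
      assume "inj_on (\<lambda>i. w ! Min (S i)) {..<k}"
      then have "card {..<k} \<le> card {..<a}"
        using head_lt by (intro card_inj_on_le) auto
      then show False using assms by simp
    qed
    moreover have "Min (S i) \<noteq> Min (S j)" if "i < k" "j < k" "i \<noteq> j" for i j
      using incr_family_disjoint[OF S_fam that] ne that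
        Min_in[OF weakly_incr_on_finite[OF incr_family_weakly_incr[OF S_fam]]]
      by (metis disjoint_iff)
    ultimately obtain i j where "i < k" "j < k" "i \<noteq> j"
      and "w ! Min (S i) = w ! Min (S j)" and "Min (S i) < Min (S j)"
      unfolding inj_on_def by (metis lessThan_iff linorder_neqE_nat)
    then obtain S' where "?optimal S'" and "?potential S < ?potential S'"
      using incr_family_uncross[OF S_fam] ne S by metis
    then show False using S_max by (simp add: not_le[symmetric])
  qed
  then obtain i0 where "i0 < k" and "\<forall>j\<in>S i0. a \<le> w ! j" by blast
  from incr_family_Cons[OF S_fam this] show ?thesis
    using S family_card_le_greene by metis
qed

lemma sum_words_Suc:
  "(\<Sum>w\<in>words d (Suc n). f w) = (\<Sum>a<d. \<Sum>w\<in>words d n. f (a # w))"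
proof -
  have words_Suc: "words d (Suc n) = (\<lambda>(a, w). a # w) ` ({..<d} \<times> words d n)"
    by (auto simp: words_def length_Suc_conv image_iff)
  have "inj_on (\<lambda>(a, w). a # w) ({..<d} \<times> words d n)"
    by (auto simp: inj_on_def)
  then have "(\<Sum>w\<in>words d (Suc n). f w) = (\<Sum>(a, w)\<in>{..<d} \<times> words d n. f (a # w))"
    unfolding words_Suc by (simp add: sum.reindex case_prod_unfold)
  then show ?thesis by (simp add: sum.cartesian_product)
qed

lemma word_prob_Cons: "word_prob \<alpha> (a # w) = \<alpha> a * word_prob \<alpha> w"
  unfolding word_prob_def length_Cons prod.lessThan_Suc_shift by simp

lemma sum_word_prob:
  assumes "(\<Sum>i<d. \<alpha> i) = 1"
  shows "(\<Sum>w\<in>words d n. word_prob \<alpha> w) = 1"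
proof (induction n)
  case 0
  have "words d 0 = {[]}" by (auto simp: words_def)
  then show ?case by (simp add: word_prob_def)
next
  case (Suc n)
  then show ?case
    using assms by (simp add: sum_words_Suc word_prob_Cons sum_distrib_left[symmetric]
        sum_distrib_right[symmetric])
qed

lemma word_prob_nonneg:
  assumes "\<forall>i<d. \<alpha> i \<ge> 0" and "w \<in> words d n"
  shows "0 \<le> word_prob \<alpha> w"
  unfolding word_prob_def
  using assms by (intro prod_nonneg) (auto simp: words_def dest!: nth_mem)

lemma expectation_words_Suc_ge:
  fixes f :: "nat list \<Rightarrow> real" and g :: "nat \<Rightarrow> real"
  assumes nonneg: "\<forall>i<d. \<alpha> i \<ge> 0" and total: "(\<Sum>i<d. \<alpha> i) = 1"
    and step: "\<And>a w. a < d \<Longrightarrow> w \<in> words d n \<Longrightarrow> f w + g a \<le> f (a # w)"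
  shows "(\<Sum>w\<in>words d n. word_prob \<alpha> w * f w) + (\<Sum>a<d. \<alpha> a * g a)
       \<le> (\<Sum>w\<in>words d (Suc n). word_prob \<alpha> w * f w)"
proof -
  have "(\<Sum>w\<in>words d n. word_prob \<alpha> w * f w) + (\<Sum>a<d. \<alpha> a * g a)
      = (\<Sum>a<d. \<Sum>w\<in>words d n. \<alpha> a * word_prob \<alpha> w * (f w + g a))"
    using total sum_word_prob[OF total, of n]
    by (simp add: distrib_left sum.distrib sum.swap[of _ "{..<d}"] sum_distrib_left[symmetric]
        sum_distrib_right[symmetric] mult_ac)
  also have "\<dots> \<le> (\<Sum>a<d. \<Sum>w\<in>words d n. \<alpha> a * word_prob \<alpha> w * f (a # w))"
    using nonneg word_prob_nonneg[OF nonneg] step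
    by (intro sum_mono mult_left_mono) auto
  also have "\<dots> = (\<Sum>w\<in>words d (Suc n). word_prob \<alpha> w * f w)"
    by (simp add: sum_words_Suc word_prob_Cons)
  finally show ?thesis .
qed

lemma SW_excess_eq:
  assumes "(\<Sum>i<d. \<alpha> i) = 1"
  shows "SW_excess d \<alpha> k n
       = (\<Sum>w\<in>words d n. word_prob \<alpha> w * real (greene k w)) - (\<Sum>j<k. \<alpha> j) * real n"
  using sum_word_prob[OF assms, of n] unfolding SW_excess_def sum_shRSK_eq_greene
  by (simp add: right_diff_distrib sum_subtractf sum_distrib_right[symmetric])

theorem mainTheorem6:
  fixes d k :: nat and \<alpha> :: "nat \<Rightarrow> real"
  assumes nonneg: "\<forall>i<d. \<alpha> i \<ge> 0"
    and total: "(\<Sum>i<d. \<alpha> i) = 1"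
    and sorted: "\<forall>i j. i \<le> j \<and> j < d \<longrightarrow> \<alpha> j \<le> \<alpha> i"
    and k: "1 \<le> k" "k \<le> d"
  shows "mono (\<lambda>n. SW_excess d \<alpha> k n)"
proof (rule mono_iff_le_Suc[THEN iffD2], intro allI)
  fix n
  let ?first = "\<lambda>a. if a < k then 1 else 0 :: real"
  have "real (greene k w) + ?first a \<le> real (greene k (a # w))" for a w
    using greene_le_greene_Cons[of k w a] greene_Cons_ge_Suc[of a k w] by auto
  then have "(\<Sum>w\<in>words d n. word_prob \<alpha> w * real (greene k w)) + (\<Sum>a<d. \<alpha> a * ?first a)
      \<le> (\<Sum>w\<in>words d (Suc n). word_prob \<alpha> w * real (greene k w))"
    by (rule expectation_words_Suc_ge[OF nonneg total])
  moreover have "(\<Sum>a<d. \<alpha> a * ?first a) = (\<Sum>j<k. \<alpha> j)"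
  proof -
    have "(\<Sum>a<d. \<alpha> a * ?first a) = (\<Sum>a\<in>{a \<in> {..<d}. a < k}. \<alpha> a)"
      by (subst sum.inter_filter) (auto intro: sum.cong)
    also have "{a \<in> {..<d}. a < k} = {..<k}" using k(2) by auto
    finally show ?thesis .
  qed
  ultimately show "SW_excess d \<alpha> k n \<le> SW_excess d \<alpha> k (Suc n)"
    by (simp add: SW_excess_eq[OF total] algebra_simps)
qed

end
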